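(* Let $f\in\mathfrak{F}_{sc}$ (with $n=2$) and let $\rho=\frac12(I+\vec n\cdot\vec\sigma)$ be a qubit state with Bloch vector $\vec n=n(\sin\theta\cos\phi,\sin\theta\sin\phi,\cos\theta)$, where $0<n\le1$, $0\le\theta\le\pi/2$, $0\le\phi<2\pi$. Define $\theta_o=\arccos(n\cos\theta)$ and $\theta_3=\arccos\sqrt{1-n^2\sin^2\theta}$, and the following pure state decompositions of $\rho$: (M) $\mathfrak{D}^{(M)}$: $|\chi_{1,2}\rangle=\cos\frac{\theta_o}{2}|0\rangle\pm e^{i\phi}\sin\frac{\theta_o}{2}|1\rangle$ with probabilities $p_{1,2}=\frac12\big(1\pm\frac{n\sin\theta}{\sin\theta_o}\big)$ (taking $p_{1,2}=\frac12$ if $\sin\theta_o=0$); (s) the spectral decomposition $\mathfrak{D}^{(s)}$: $|\psi_1\rangle=\cos\frac{\theta}{2}|0\rangle+e^{i\phi}\sin\frac{\theta}{2}|1\rangle$ with probability $\frac{1+n}{2}$ and $|\psi_2\rangle=\sin\frac{\theta}{2}|0\rangle-e^{i\phi}\cos\frac{\theta}{2}|1\rangle$ with probability $\frac{1-n}{2}$; (m$_1$) $\mathfrak{D}^{(m_1)}$: $|\psi_1\rangle=\cos\frac{\theta_3}{2}|0\rangle+e^{i\phi}\sin\frac{\theta_3}{2}|1\rangle$ and $|\psi_2\rangle=\sin\frac{\theta_3}{2}|0\rangle+e^{i\phi}\cos\frac{\theta_3}{2}|1\rangle$ with probabilities $p_{1,2}=\frac12\big(1\pm\frac{n\cos\theta}{\cos\theta_3}\big)$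 (taking $p_{1,2}=\frac12$ if $\cos\theta_3=0$). Then these are indeed pure state decompositions of $\rho$, and $$\bar C_f(\mathfrak{D}^{(m_1)})\le\bar C_f(\mathfrak{D}^{(s)})\le\bar C_f(\mathfrak{D}^{(M)})=\max_{\mathfrak{D}}\bar C_f(\mathfrak{D}),$$ where the maximum runs over all pure state decompositions of $\rho$. More explicitly, $\bar C_f(\mathfrak{D}^{(M)})=f(\cos^2\frac{\theta_o}{2},\sin^2\frac{\theta_o}{2})$, $\bar C_f(\mathfrak{D}^{(s)})=f(\cos^2\frac{\theta}{2},\sin^2\frac{\theta}{2})$, $\bar C_f(\mathfrak{D}^{(m_1)})=f(\cos^2\frac{\theta_3}{2},\sin^2\frac{\theta_3}{2})$.
   Context: Reference basis $\{|0\rangle,|1\rangle\}$ of $\mathbb{C}^2$; $\vec\sigma=(\sigma_1,\sigma_2,\sigma_3)$ are the Pauli matrices. Let $\Omega$ be the probability simplex in $\mathbb{R}^2$. $\mathfrak{F}_{sc}$ denotes the set of functions $f:\Omega\to\mathbb{R}$ such that (i) $f((1,0))=0$; (ii) $f(x_1,x_2)=f(x_2,x_1)$; (iii) $f$ is concave. For a unit vector $|\psi\rangle=\psi_0|0\rangle+\psi_1|1\rangle$, $C_f(|\psi\rangle)=f(|\psi_0|^2,|\psi_1|^2)$. A pure state decomposition of $\rho$ is a finite family $\{p_k,|\psi_k\rangle\}$ with $p_k\ge0$, $\sum_kp_k=1$, unit vectors $|\psi_k\rangle$ and $\rho=\sum_kp_k|\psi_k\rangle\langle\psi_k|$; its average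 coherence is $\bar C_f(\mathfrak{D})=\sum_kp_kC_f(|\psi_k\rangle)$. *)

theory Defs
  imports "HOL-Analysis.Analysis"
begin

text \<open>Qubit kets live in complex^2; index 1 is the basis vector |0>, index 2 is |1>.
  Operators on C^2 are complex^2^2 (row i, column j = A $ i $ j).\<close>

definition ket :: "complex \<Rightarrow> complex \<Rightarrow> complex^2" where
  "ket a b = vector [a, b]"

definition proj :: "complex^2 \<Rightarrow> complex^2^2" where
  "proj \<psi> = (\<chi> i j. \<psi> $ i * cnj (\<psi> $ j))"

definition sigma1 :: "complex^2^2" where
  "sigma1 = vector [vector [0, 1], vector [1, 0]]"
definition sigma2 :: "complex^2^2" where
  "sigma2 = vector [vector [0, - \<i>], vector [\<i>, 0]]"
definition sigma3 :: "complex^2^2" where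
  "sigma3 = vector [vector [1, 0], vector [0, -1]]"

definition bloch_state :: "real \<Rightarrow> real \<Rightarrow> real \<Rightarrow> complex^2^2" where
  "bloch_state x y z = (1/2) *\<^sub>R (mat 1 + x *\<^sub>R sigma1 + y *\<^sub>R sigma2 + z *\<^sub>R sigma3)"

definition Omega :: "(real \<times> real) set" where
  "Omega = {(x1, x2). 0 \<le> x1 \<and> 0 \<le> x2 \<and> x1 + x2 = 1}"

definition F_sc :: "(real \<times> real \<Rightarrow> real) \<Rightarrow> bool" where
  "F_sc f \<longleftrightarrow> f (1, 0) = 0 \<and> (\<forall>x1 x2. (x1, x2) \<in> Omega \<longrightarrow> f (x1, x2) = f (x2, x1))
      \<and> concave_on Omega f"

definition Cf :: "(real \<times> real \<Rightarrow> real) \<Rightarrow> complex^2 \<Rightarrow> real" where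
  "Cf f \<psi> = f ((cmod (\<psi> $ 1))\<^sup>2, (cmod (\<psi> $ 2))\<^sup>2)"

definition is_pure_dec :: "complex^2^2 \<Rightarrow> (real \<times> (complex^2)) list \<Rightarrow> bool" where
  "is_pure_dec \<rho> D \<longleftrightarrow> (\<forall>(p, \<psi>) \<in> set D. 0 \<le> p \<and> norm \<psi> = 1)
      \<and> sum_list (map fst D) = 1
      \<and> \<rho> = sum_list (map (\<lambda>(p, \<psi>). p *\<^sub>R proj \<psi>) D)"

definition avgC :: "(real \<times> real \<Rightarrow> real) \<Rightarrow> (real \<times> (complex^2)) list \<Rightarrow> real" where
  "avgC f D = sum_list (map (\<lambda>(p, \<psi>). p * Cf f \<psi>) D)"

end

theory Submission
  imports Defs
begin

text \<open>Every pure state decomposition averages the populations of its states to the diagonal of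
  rho, so by Jensen's inequality no decomposition beats f at that diagonal point; D^(M) attains it
  because both its states have the populations of the diagonal. The states of D^(s) and of D^(m1)
  have swapped populations, so by the symmetry of f each average is f at the populations of the
  first state. On the simplex a symmetric concave f decreases towards the vertices, which orders
  the three values by cos theta_o <= cos theta <= cos theta_3.\<close>

lemma ket_nth [simp]: "ket a b $ 1 = a" "ket a b $ 2 = b"
  by (simp_all add: ket_def)

lemma proj_nth [simp]: "proj \<psi> $ i $ j = \<psi> $ i * cnj (\<psi> $ j)"
  by (simp add: proj_def)

lemma norm_vec2_squared: "(norm (\<psi> :: complex^2))\<^sup>2 = (cmod (\<psi> $ 1))\<^sup>2 + (cmod (\<psi> $ 2))\<^sup>2"
  by (simp add: norm_vec_def L2_set_def sum_2)

lemma norm_ket: "norm (ket a b) = sqrt ((cmod a)\<^sup>2 + (cmod b)\<^sup>2)"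
  by (simp add: norm_vec_def L2_set_def sum_2)

lemma bloch_state_nth:
  "bloch_state (r * cos \<phi>) (r * sin \<phi>) z $ 1 $ 1 = of_real ((1 + z) / 2)"
  "bloch_state (r * cos \<phi>) (r * sin \<phi>) z $ 1 $ 2 = of_real (r / 2) * cis (- \<phi>)"
  "bloch_state (r * cos \<phi>) (r * sin \<phi>) z $ 2 $ 1 = of_real (r / 2) * cis \<phi>"
  "bloch_state (r * cos \<phi>) (r * sin \<phi>) z $ 2 $ 2 = of_real ((1 - z) / 2)"
  by (simp_all add: bloch_state_def sigma1_def sigma2_def sigma3_def mat_def complex_eq_iff)

lemma proj_real_phase_nth:
  "proj (ket (of_real a) (cis \<phi> * of_real b)) $ 1 $ 1 = of_real (a\<^sup>2)"
  "proj (ket (of_real a) (cis \<phi> * of_real b)) $ 1 $ 2 = of_real (a * b) * cis (- \<phi>)"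
  "proj (ket (of_real a) (cis \<phi> * of_real b)) $ 2 $ 1 = of_real (a * b) * cis \<phi>"
  "proj (ket (of_real a) (cis \<phi> * of_real b)) $ 2 $ 2 = of_real (b\<^sup>2)"
  by (simp_all add: cis_cnj cis_mult power2_eq_square)

lemma is_pure_dec_two:
  fixes p1 p2 a1 b1 a2 b2 r z \<phi> :: real
  assumes "0 \<le> p1" "0 \<le> p2" "p1 + p2 = 1" "a1\<^sup>2 + b1\<^sup>2 = 1" "a2\<^sup>2 + b2\<^sup>2 = 1"
    and "p1 * a1\<^sup>2 + p2 * a2\<^sup>2 = (1 + z) / 2" "p1 * b1\<^sup>2 + p2 * b2\<^sup>2 = (1 - z) / 2"
    and "p1 * (a1 * b1) + p2 * (a2 * b2) = r / 2"
  shows "is_pure_dec (bloch_state (r * cos \<phi>) (r * sin \<phi>) z)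
     [(p1, ket (of_real a1) (cis \<phi> * of_real b1)), (p2, ket (of_real a2) (cis \<phi> * of_real b2))]"
proof -
  let ?\<psi>1 = "ket (of_real a1) (cis \<phi> * of_real b1)" and ?\<psi>2 = "ket (of_real a2) (cis \<phi> * of_real b2)"
  have entry: "p1 *\<^sub>R (of_real x1 * c) + p2 *\<^sub>R (of_real x2 * c) = of_real y * c"
    if "p1 * x1 + p2 * x2 = y" for x1 x2 y and c :: complex
    unfolding that[symmetric] by (simp add: scaleR_conv_of_real algebra_simps)
  have "p1 *\<^sub>R proj ?\<psi>1 $ i $ j + p2 *\<^sub>R proj ?\<psi>2 $ i $ j
      = bloch_state (r * cos \<phi>) (r * sin \<phi>) z $ i $ j" for i j
  proof -
    have "i = 1 \<or> i = 2" "j = 1 \<or> j = 2" using exhaust_2 by auto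
    then show ?thesis
      using assms entry[where c = 1, simplified] entry[where c = "cis \<phi>"] entry[where c = "cis (- \<phi>)"]
      by (auto simp only: proj_real_phase_nth bloch_state_nth)
  qed
  then show ?thesis
    using assms by (simp del: proj_nth add: is_pure_dec_def vec_eq_iff norm_ket norm_mult)
qed

lemma half_angle:
  fixes t :: real
  shows cos_half_squared: "(cos (t / 2))\<^sup>2 = (1 + cos t) / 2"
    and sin_half_squared: "(sin (t / 2))\<^sup>2 = (1 - cos t) / 2"
    and cos_half_mult_sin_half: "cos (t / 2) * sin (t / 2) = sin t / 2"
  using cos_double_cos[of "t / 2"] sin_double[of "t / 2"] sin_squared_eq[of "t / 2"] by simp_all

text \<open>The ket with amplitudes cos(t/2) and e^(i phi) sin(t/2) is the pure state with Bloch vector at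
  polar angle t and azimuth phi. The three decompositions below pair it with the state on the same
  latitude at azimuth phi + pi, with its antipode, and with its mirror image in the equatorial plane.\<close>

lemma is_pure_dec_latitude:
  assumes "\<bar>q\<bar> \<le> 1"
  shows "is_pure_dec (bloch_state (q * sin t * cos \<phi>) (q * sin t * sin \<phi>) (cos t))
    [((1 + q) / 2, ket (of_real (cos (t / 2))) (cis \<phi> * of_real (sin (t / 2)))),
     ((1 - q) / 2, ket (of_real (cos (t / 2))) (- cis \<phi> * of_real (sin (t / 2))))]"
proof -
  have "is_pure_dec (bloch_state (q * sin t * cos \<phi>) (q * sin t * sin \<phi>) (cos t))
    [((1 + q) / 2, ket (of_real (cos (t / 2))) (cis \<phi> * of_real (sin (t / 2)))),
     ((1 - q) / 2, ket (of_real (cos (t / 2))) (cis \<phi> * of_real (- sin (t / 2))))]"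
  proof (rule is_pure_dec_two)
    have "(1 + q) / 2 * (cos (t / 2) * sin (t / 2)) + (1 - q) / 2 * (cos (t / 2) * - sin (t / 2))
        = q * (cos (t / 2) * sin (t / 2))"
      by (simp add: field_simps)
    then show "(1 + q) / 2 * (cos (t / 2) * sin (t / 2)) + (1 - q) / 2 * (cos (t / 2) * - sin (t / 2))
        = q * sin t / 2"
      by (simp add: cos_half_mult_sin_half)
  qed (use assms in \<open>auto simp: half_angle field_simps\<close>)
  then show ?thesis by simp
qed

lemma is_pure_dec_antipodal:
  assumes "\<bar>n\<bar> \<le> 1"
  shows "is_pure_dec (bloch_state (n * sin t * cos \<phi>) (n * sin t * sin \<phi>) (n * cos t))
    [((1 + n) / 2, ket (of_real (cos (t / 2))) (cis \<phi> * of_real (sin (t / 2)))),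
     ((1 - n) / 2, ket (of_real (sin (t / 2))) (- cis \<phi> * of_real (cos (t / 2))))]"
proof -
  have "is_pure_dec (bloch_state (n * sin t * cos \<phi>) (n * sin t * sin \<phi>) (n * cos t))
    [((1 + n) / 2, ket (of_real (cos (t / 2))) (cis \<phi> * of_real (sin (t / 2)))),
     ((1 - n) / 2, ket (of_real (sin (t / 2))) (cis \<phi> * of_real (- cos (t / 2))))]"
  proof (rule is_pure_dec_two)
    have "(1 + n) / 2 * (cos (t / 2) * sin (t / 2)) + (1 - n) / 2 * (sin (t / 2) * - cos (t / 2))
        = n * (cos (t / 2) * sin (t / 2))"
      by (simp add: field_simps)
    then show "(1 + n) / 2 * (cos (t / 2) * sin (t / 2)) + (1 - n) / 2 * (sin (t / 2) * - cos (t / 2))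
        = n * sin t / 2"
      by (simp add: cos_half_mult_sin_half)
  qed (use assms in \<open>auto simp: half_angle field_simps\<close>)
  then show ?thesis by simp
qed

lemma is_pure_dec_equator_mirror:
  assumes "\<bar>q\<bar> \<le> 1"
  shows "is_pure_dec (bloch_state (sin t * cos \<phi>) (sin t * sin \<phi>) (q * cos t))
    [((1 + q) / 2, ket (of_real (cos (t / 2))) (cis \<phi> * of_real (sin (t / 2)))),
     ((1 - q) / 2, ket (of_real (sin (t / 2))) (cis \<phi> * of_real (cos (t / 2))))]"
proof (rule is_pure_dec_two)
  have "(1 + q) / 2 * (cos (t / 2) * sin (t / 2)) + (1 - q) / 2 * (sin (t / 2) * cos (t / 2))
      = cos (t / 2) * sin (t / 2)"
    by (simp add: field_simps)
  then show "(1 + q) / 2 * (cos (t / 2) * sin (t / 2)) + (1 - q) / 2 * (sin (t / 2) * cos (t / 2))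
      = sin t / 2"
    by (simp add: cos_half_mult_sin_half)
qed (use assms in \<open>auto simp: half_angle field_simps\<close>)

lemma avgC_latitude:
  "avgC f [((1 + q) / 2, ket (of_real (cos (t / 2))) (cis \<phi> * of_real (sin (t / 2)))),
     ((1 - q) / 2, ket (of_real (cos (t / 2))) (- cis \<phi> * of_real (sin (t / 2))))]
   = f ((cos (t / 2))\<^sup>2, (sin (t / 2))\<^sup>2)"
  by (simp add: avgC_def Cf_def norm_mult field_simps)

lemma avgC_antipodal:
  assumes "\<And>x y. (x, y) \<in> Omega \<Longrightarrow> f (x, y) = f (y, x)"
  shows "avgC f [((1 + n) / 2, ket (of_real (cos (t / 2))) (cis \<phi> * of_real (sin (t / 2)))),
     ((1 - n) / 2, ket (of_real (sin (t / 2))) (- cis \<phi> * of_real (cos (t / 2))))]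
   = f ((cos (t / 2))\<^sup>2, (sin (t / 2))\<^sup>2)"
  using assms[of "(sin (t / 2))\<^sup>2" "(cos (t / 2))\<^sup>2"]
  by (simp add: avgC_def Cf_def norm_mult Omega_def field_simps)

lemma avgC_equator_mirror:
  assumes "\<And>x y. (x, y) \<in> Omega \<Longrightarrow> f (x, y) = f (y, x)"
  shows "avgC f [((1 + q) / 2, ket (of_real (cos (t / 2))) (cis \<phi> * of_real (sin (t / 2)))),
     ((1 - q) / 2, ket (of_real (sin (t / 2))) (cis \<phi> * of_real (cos (t / 2))))]
   = f ((cos (t / 2))\<^sup>2, (sin (t / 2))\<^sup>2)"
  using assms[of "(sin (t / 2))\<^sup>2" "(cos (t / 2))\<^sup>2"]
  by (simp add: avgC_def Cf_def norm_mult Omega_def field_simps)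

lemma sum_list_proj_diag:
  "Re (sum_list (map (\<lambda>(p, \<psi>). p *\<^sub>R proj \<psi>) D) $ k $ k)
     = sum_list (map (\<lambda>(p, \<psi>). p * (cmod (\<psi> $ k))\<^sup>2) D)"
proof (induction D)
  case (Cons d D)
  have "Re (\<psi> $ k * cnj (\<psi> $ k)) = (cmod (\<psi> $ k))\<^sup>2" for \<psi> :: "complex^2"
    unfolding complex_norm_square[symmetric] by simp
  with Cons show ?case by (simp add: case_prod_beta)
qed simp

text \<open>Jensen's inequality, since the populations of the states average to the diagonal of rho.\<close>

lemma avgC_le_diagonal:
  assumes "concave_on Omega f" and "is_pure_dec \<rho> D"
  shows "avgC f D \<le> f (Re (\<rho> $ 1 $ 1), Re (\<rho> $ 2 $ 2))"
proof -
  define p where "p i = fst (D ! i)" for i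
  define y where "y i = ((cmod (snd (D ! i) $ 1))\<^sup>2, (cmod (snd (D ! i) $ 2))\<^sup>2)" for i
  have p_nonneg: "0 \<le> p i" and y_Omega: "y i \<in> Omega" if "i \<in> {..<length D}" for i
  proof -
    have "D ! i \<in> set D" using that by simp
    then have "0 \<le> p i \<and> norm (snd (D ! i)) = 1"
      using assms(2) unfolding is_pure_dec_def p_def by (auto simp: case_prod_beta)
    then show "0 \<le> p i" "y i \<in> Omega"
      using norm_vec2_squared[of "snd (D ! i)"] by (auto simp: y_def Omega_def)
  qed
  have p_sum: "(\<Sum>i<length D. p i) = 1"
    using assms(2) by (simp add: is_pure_dec_def p_def sum_list_sum_nth atLeast0LessThan)
  have \<rho>: "\<rho> = sum_list (map (\<lambda>(p, \<psi>). p *\<^sub>R proj \<psi>) D)"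
    using assms(2) by (simp add: is_pure_dec_def)
  have "avgC f D = (\<Sum>i<length D. p i * f (y i))"
    by (simp add: avgC_def Cf_def p_def y_def sum_list_sum_nth atLeast0LessThan case_prod_beta)
  also have "\<dots> \<le> f (\<Sum>i<length D. p i *\<^sub>R y i)"
    using p_sum by (intro concave_on_sum[OF _ _ assms(1) p_sum p_nonneg y_Omega]) auto
  also have "(\<Sum>i<length D. p i *\<^sub>R y i) = (Re (\<rho> $ 1 $ 1), Re (\<rho> $ 2 $ 2))"
    unfolding \<rho> sum_list_proj_diag
    by (simp add: prod_eq_iff fst_sum snd_sum p_def y_def sum_list_sum_nth atLeast0LessThan case_prod_beta)
  finally show ?thesis .
qed

text \<open>The point for c is a convex combination of the point for d and its mirror image, at which
  f takes the same value.\<close>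

lemma symmetric_concave_antimono:
  assumes "concave_on Omega f" and sym: "\<And>x y. (x, y) \<in> Omega \<Longrightarrow> f (x, y) = f (y, x)"
    and "0 \<le> c" "c \<le> d" "d \<le> 1"
  shows "f ((1 + d) / 2, (1 - d) / 2) \<le> f ((1 + c) / 2, (1 - c) / 2)"
proof (cases "d = 0")
  case False
  define s where "s = (d - c) / (2 * d)"
  have s: "0 \<le> s" "s \<le> 1" using assms False by (auto simp: s_def field_simps)
  have X: "((1 + d) / 2, (1 - d) / 2) \<in> Omega" and Y: "((1 - d) / 2, (1 + d) / 2) \<in> Omega"
    using assms by (auto simp: Omega_def field_simps)
  have comb: "(1 - s) *\<^sub>R ((1 + d) / 2, (1 - d) / 2) + s *\<^sub>R ((1 - d) / 2, (1 + d) / 2)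
      = ((1 + c) / 2, (1 - c) / 2)"
    using False by (simp add: s_def prod_eq_iff field_simps)
  have "(1 - s) * f ((1 + d) / 2, (1 - d) / 2) + s * f ((1 - d) / 2, (1 + d) / 2)
      \<le> f ((1 + c) / 2, (1 - c) / 2)"
    using concave_onD[OF assms(1) s X Y] unfolding comb .
  then show ?thesis using sym[OF X] by (simp add: algebra_simps)
qed (use assms in simp)

lemma half_angle_antimono:
  assumes "concave_on Omega f" and "\<And>x y. (x, y) \<in> Omega \<Longrightarrow> f (x, y) = f (y, x)"
    and "0 \<le> cos s" "cos s \<le> cos t"
  shows "f ((cos (t / 2))\<^sup>2, (sin (t / 2))\<^sup>2) \<le> f ((cos (s / 2))\<^sup>2, (sin (s / 2))\<^sup>2)"
  unfolding cos_half_squared sin_half_squared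
  by (rule symmetric_concave_antimono) (use assms in auto)

lemma arccos_scaled_cos:
  fixes n \<theta> :: real
  assumes "0 \<le> n" "n \<le> 1" "0 \<le> cos \<theta>" "0 \<le> sin \<theta>"
  shows "cos (arccos (n * cos \<theta>)) = n * cos \<theta>" "n * sin \<theta> \<le> sin (arccos (n * cos \<theta>))"
proof -
  have "0 \<le> n * cos \<theta>" "n * cos \<theta> \<le> 1" using assms by (simp_all add: mult_le_one)
  then have bounds: "- 1 \<le> n * cos \<theta>" "n * cos \<theta> \<le> 1" by linarith+
  then show "cos (arccos (n * cos \<theta>)) = n * cos \<theta>" by (rule cos_arccos)
  have "(n * sin \<theta>)\<^sup>2 = n\<^sup>2 - (n * cos \<theta>)\<^sup>2"
    by (simp add: power_mult_distrib sin_squared_eq right_diff_distrib)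
  also have "\<dots> \<le> 1 - (n * cos \<theta>)\<^sup>2" using assms by (simp add: power_le_one)
  finally have "n * sin \<theta> \<le> sqrt (1 - (n * cos \<theta>)\<^sup>2)" by (rule real_le_rsqrt)
  then show "n * sin \<theta> \<le> sin (arccos (n * cos \<theta>))" by (simp add: sin_arccos[OF bounds])
qed

lemma arccos_sqrt_scaled_sin:
  fixes n \<theta> :: real
  assumes "0 \<le> n" "n \<le> 1" "0 \<le> sin \<theta>"
  shows "sin (arccos (sqrt (1 - n\<^sup>2 * (sin \<theta>)\<^sup>2))) = n * sin \<theta>"
    "cos \<theta> \<le> cos (arccos (sqrt (1 - n\<^sup>2 * (sin \<theta>)\<^sup>2)))"
proof -
  have "n\<^sup>2 * (sin \<theta>)\<^sup>2 \<le> (sin \<theta>)\<^sup>2" using assms by (simp add: mult_left_le_one_le power_le_one)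
  moreover have "(sin \<theta>)\<^sup>2 \<le> 1" by (simp add: abs_square_le_1)
  ultimately have nonneg: "0 \<le> sqrt (1 - n\<^sup>2 * (sin \<theta>)\<^sup>2)"
    and cos_le: "(cos \<theta>)\<^sup>2 \<le> 1 - n\<^sup>2 * (sin \<theta>)\<^sup>2"
    by (simp_all add: cos_squared_eq)
  have bounds: "- 1 \<le> sqrt (1 - n\<^sup>2 * (sin \<theta>)\<^sup>2)" "sqrt (1 - n\<^sup>2 * (sin \<theta>)\<^sup>2) \<le> 1"
    using nonneg by (linarith, simp)
  have "cos \<theta> \<le> sqrt (1 - n\<^sup>2 * (sin \<theta>)\<^sup>2)" using cos_le by (rule real_le_rsqrt)
  then show "cos \<theta> \<le> cos (arccos (sqrt (1 - n\<^sup>2 * (sin \<theta>)\<^sup>2)))" by (simp add: cos_arccos[OF bounds])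
  have "sin (arccos (sqrt (1 - n\<^sup>2 * (sin \<theta>)\<^sup>2))) = sqrt (1 - (sqrt (1 - n\<^sup>2 * (sin \<theta>)\<^sup>2))\<^sup>2)"
    by (rule sin_arccos[OF bounds])
  also have "\<dots> = sqrt ((n * sin \<theta>)\<^sup>2)" using nonneg by (simp add: power_mult_distrib)
  also have "\<dots> = n * sin \<theta>" using assms by simp
  finally show "sin (arccos (sqrt (1 - n\<^sup>2 * (sin \<theta>)\<^sup>2))) = n * sin \<theta>" .
qed

lemma guarded_ratio:
  fixes a b :: real
  assumes "0 \<le> a" "a \<le> b"
  shows "\<bar>if b = 0 then 0 else a / b\<bar> \<le> 1" "(if b = 0 then 0 else a / b) * b = a"
  using assms by auto

theorem mainTheorem5:
  fixes f :: "real \<times> real \<Rightarrow> real" and n \<theta> \<phi> :: real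
  assumes hf: "F_sc f"
    and hn: "0 < n" "n \<le> 1"
    and h\<theta>: "0 \<le> \<theta>" "\<theta> \<le> pi / 2"
    and h\<phi>: "0 \<le> \<phi>" "\<phi> < 2 * pi"
  defines "\<rho> \<equiv> bloch_state (n * sin \<theta> * cos \<phi>) (n * sin \<theta> * sin \<phi>) (n * cos \<theta>)"
    and "\<theta>o \<equiv> arccos (n * cos \<theta>)"
    and "\<theta>3 \<equiv> arccos (sqrt (1 - n\<^sup>2 * (sin \<theta>)\<^sup>2))"
  defines "DM \<equiv>
      (let q = (if sin \<theta>o = 0 then 0 else n * sin \<theta> / sin \<theta>o) in
       [((1 + q) / 2, ket (complex_of_real (cos (\<theta>o / 2))) (cis \<phi> * complex_of_real (sin (\<theta>o / 2)))),
        ((1 - q) / 2, ket (complex_of_real (cos (\<theta>o / 2))) (- cis \<phi> * complex_of_real (sin (\<theta>o / 2))))])"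
    and "Ds \<equiv>
       [((1 + n) / 2, ket (complex_of_real (cos (\<theta> / 2))) (cis \<phi> * complex_of_real (sin (\<theta> / 2)))),
        ((1 - n) / 2, ket (complex_of_real (sin (\<theta> / 2))) (- cis \<phi> * complex_of_real (cos (\<theta> / 2))))]"
    and "Dm1 \<equiv>
      (let q = (if cos \<theta>3 = 0 then 0 else n * cos \<theta> / cos \<theta>3) in
       [((1 + q) / 2, ket (complex_of_real (cos (\<theta>3 / 2))) (cis \<phi> * complex_of_real (sin (\<theta>3 / 2)))),
        ((1 - q) / 2, ket (complex_of_real (sin (\<theta>3 / 2))) (cis \<phi> * complex_of_real (cos (\<theta>3 / 2))))])"
  shows "is_pure_dec \<rho> DM \<and> is_pure_dec \<rho> Ds \<and> is_pure_dec \<rho> Dm1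
    \<and> avgC f Dm1 \<le> avgC f Ds \<and> avgC f Ds \<le> avgC f DM
    \<and> (\<forall>D. is_pure_dec \<rho> D \<longrightarrow> avgC f D \<le> avgC f DM)
    \<and> avgC f DM = f ((cos (\<theta>o / 2))\<^sup>2, (sin (\<theta>o / 2))\<^sup>2)
    \<and> avgC f Ds = f ((cos (\<theta> / 2))\<^sup>2, (sin (\<theta> / 2))\<^sup>2)
    \<and> avgC f Dm1 = f ((cos (\<theta>3 / 2))\<^sup>2, (sin (\<theta>3 / 2))\<^sup>2)"
proof -
  from hf have conc: "concave_on Omega f" and sym: "\<And>x y. (x, y) \<in> Omega \<Longrightarrow> f (x, y) = f (y, x)"
    unfolding F_sc_def by auto
  have trig: "0 \<le> cos \<theta>" "0 \<le> sin \<theta>" using h\<theta> by (auto intro: cos_ge_zero sin_ge_zero)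
  then have ncos: "0 \<le> n * cos \<theta>" "n * cos \<theta> \<le> cos \<theta>" and nsin: "0 \<le> n * sin \<theta>"
    using hn by (auto simp: mult_left_le_one_le)
  have cos_\<theta>o: "cos \<theta>o = n * cos \<theta>" and sin_\<theta>o: "n * sin \<theta> \<le> sin \<theta>o"
    using arccos_scaled_cos[of n \<theta>] hn trig unfolding \<theta>o_def by simp_all
  have sin_\<theta>3: "sin \<theta>3 = n * sin \<theta>" and cos_\<theta>_le: "cos \<theta> \<le> cos \<theta>3"
    using arccos_sqrt_scaled_sin[of n \<theta>] hn trig unfolding \<theta>3_def by simp_all
  have ncos_\<theta>3: "n * cos \<theta> \<le> cos \<theta>3" using ncos(2) cos_\<theta>_le by linarith
  have decM: "is_pure_dec \<rho> DM"
    using is_pure_dec_latitude[OF guarded_ratio(1)[OF nsin sin_\<theta>o], of \<theta>o \<phi>]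
    unfolding DM_def Let_def guarded_ratio(2)[OF nsin sin_\<theta>o] cos_\<theta>o \<rho>_def .
  have decS: "is_pure_dec \<rho> Ds"
    unfolding \<rho>_def Ds_def using hn by (intro is_pure_dec_antipodal) simp
  have decm: "is_pure_dec \<rho> Dm1"
    using is_pure_dec_equator_mirror[OF guarded_ratio(1)[OF ncos(1) ncos_\<theta>3], of \<theta>3 \<phi>]
    unfolding Dm1_def Let_def guarded_ratio(2)[OF ncos(1) ncos_\<theta>3] sin_\<theta>3 \<rho>_def .
  have vM: "avgC f DM = f ((cos (\<theta>o / 2))\<^sup>2, (sin (\<theta>o / 2))\<^sup>2)"
    unfolding DM_def Let_def by (rule avgC_latitude)
  have vS: "avgC f Ds = f ((cos (\<theta> / 2))\<^sup>2, (sin (\<theta> / 2))\<^sup>2)"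
    unfolding Ds_def by (intro avgC_antipodal sym)
  have vm: "avgC f Dm1 = f ((cos (\<theta>3 / 2))\<^sup>2, (sin (\<theta>3 / 2))\<^sup>2)"
    unfolding Dm1_def Let_def by (intro avgC_equator_mirror sym)
  have "avgC f Dm1 \<le> avgC f Ds"
    unfolding vm vS using trig cos_\<theta>_le by (intro half_angle_antimono[where f = f, OF conc sym])
  moreover have "avgC f Ds \<le> avgC f DM"
    unfolding vS vM using ncos cos_\<theta>o by (intro half_angle_antimono[where f = f, OF conc sym]) simp_all
  moreover have "avgC f D \<le> avgC f DM" if "is_pure_dec \<rho> D" for D
    using avgC_le_diagonal[OF conc that]
    unfolding vM \<rho>_def bloch_state_nth half_angle cos_\<theta>o by simp
  ultimately show ?thesis using decM decS decm vM vS vm by blast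
qed

end
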